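(* Let $(\varphi,\tau_0)\in C((-\infty,0],C(\Omega))\times C_+(\Omega)$, $r\in(0,+\infty]$, $A\in C((-\infty,r),C(\Omega))$ with $A=\varphi$ on $(-\infty,0]$, and let $\tau$ be the solution of (3.1). Assume there is $M>0$ with $\sup_{t\in[0,r)}\|A(t,\cdot)\|_\infty\le M$. Set $\tau_0^\infty:=\sup_{x}\tau_0(x)$, $\varphi_{\max}:=\sup_{t\in[-\tau_0^\infty,0]}\|\varphi(t,\cdot)\|_\infty$, $M_1:=\max\{M,\varphi_{\max}\}$, and $$\tau_{\min}:=\frac{\inf_{x\in\Omega}[\tau_0(x)f(\varphi_{\max})(x)]}{\sup_{x\in\Omega}f(-M_1)(x)},\qquad \tau_{\max}:=\frac{\sup_{x\in\Omega}[\tau_0(x)f(-\varphi_{\max})(x)]}{\inf_{x\in\Omega}f(M_1)(x)}.$$ Then $0\le\tau_{\min}\le\tau(t,x)\le\tau_{\max}$ for all $t\in[0,r)$ and $x\in\Omega$.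
   Context: $\Omega\subset\mathbb R^n$ compact, $C(\Omega)$ with sup norm, $C_+(\Omega)$ nonnegative functions. $f:C(\Omega)\to C(\Omega)$ is Lipschitz, $0<f(\phi)(x)\le M_f$ for a constant $M_f$, non-increasing for the pointwise order. A real constant $c$ is identified with the constant function $c$ on $\Omega$, so $f(c)\in C(\Omega)$. Equation (3.1): $\int_{t-\tau(t,x)}^tf(A(s,\cdot))(x)ds=\int_{-\tau_0(x)}^0f(\varphi(s,\cdot))(x)ds$ for $t\in[0,r)$, $x\in\Omega$; it has a unique solution $\tau:[0,r)\to C(\Omega)$ with $\tau\ge0$. *)

theory Defs
  imports "HOL-Analysis.Analysis"
begin

text \<open>Elements of C(Omega) are represented by functions 'a => real that are
continuous on Omega; only their values on Omega matter.\<close>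

definition supnorm :: "'a set \<Rightarrow> ('a \<Rightarrow> real) \<Rightarrow> real" where
  "supnorm \<Omega> u = (SUP x\<in>\<Omega>. \<bar>u x\<bar>)"

definition cont_into_C :: "real set \<Rightarrow> 'a::topological_space set \<Rightarrow> (real \<Rightarrow> 'a \<Rightarrow> real) \<Rightarrow> bool" where
  "cont_into_C T \<Omega> u \<longleftrightarrow>
     (\<forall>t\<in>T. continuous_on \<Omega> (u t)) \<and>
     (\<forall>t\<in>T. \<forall>e>0. \<exists>d>0. \<forall>s\<in>T. \<bar>s - t\<bar> < d \<longrightarrow> supnorm \<Omega> (\<lambda>x. u s x - u t x) < e)"

definition admissible_f :: "'a::topological_space set \<Rightarrow> (('a \<Rightarrow> real) \<Rightarrow> ('a \<Rightarrow> real)) \<Rightarrow> bool" where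
  "admissible_f \<Omega> f \<longleftrightarrow>
     (\<forall>u. continuous_on \<Omega> u \<longrightarrow> continuous_on \<Omega> (f u)) \<and>
     (\<exists>L. \<forall>u v. continuous_on \<Omega> u \<longrightarrow> continuous_on \<Omega> v \<longrightarrow>
          supnorm \<Omega> (\<lambda>x. f u x - f v x) \<le> L * supnorm \<Omega> (\<lambda>x. u x - v x)) \<and>
     (\<exists>Mf. \<forall>u. continuous_on \<Omega> u \<longrightarrow> (\<forall>x\<in>\<Omega>. 0 < f u x \<and> f u x \<le> Mf)) \<and>
     (\<forall>u v. continuous_on \<Omega> u \<longrightarrow> continuous_on \<Omega> v \<longrightarrow> (\<forall>x\<in>\<Omega>. u x \<le> v x) \<longrightarrow>
          (\<forall>x\<in>\<Omega>. f v x \<le> f u x))"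

end

theory Submission
  imports Defs
begin

text \<open>Let \<open>I(t,x)\<close> be the common value of both sides of (3.1). The integrand is positive, so the
  window \<open>[t - \<tau>(t,x), t]\<close> cannot start before \<open>-\<tau>\<^sub>0(x) \<ge> -\<tau>\<^sub>0\<^sup>\<infinity>\<close>; hence \<open>|A| \<le> M\<^sub>1\<close> on the
  window and \<open>|A| \<le> \<phi>\<^sub>m\<^sub>a\<^sub>x\<close> on \<open>[-\<tau>\<^sub>0(x), 0]\<close>. Since \<open>f\<close> is antitone, this gives
  \<open>\<tau>(t,x) f(M\<^sub>1)(x) \<le> I(t,x) \<le> \<tau>(t,x) f(-M\<^sub>1)(x)\<close> and \<open>\<tau>\<^sub>0(x) f(\<phi>\<^sub>m\<^sub>a\<^sub>x)(x) \<le> I(t,x) \<le> \<tau>\<^sub>0(x) f(-\<phi>\<^sub>m\<^sub>a\<^sub>x)(x)\<close>,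
  and taking extrema over \<open>\<Omega>\<close> yields the bounds.\<close>

lemma compact_continuous_image_bdd:
  fixes g :: "'a::topological_space \<Rightarrow> real"
  assumes "compact S" "continuous_on S g"
  shows "bdd_above (g ` S)" "bdd_below (g ` S)"
proof -
  have "bounded (g ` S)" using assms compact_continuous_image compact_imp_bounded by blast
  then show "bdd_above (g ` S)" "bdd_below (g ` S)"
    by (auto intro: bounded_imp_bdd_above bounded_imp_bdd_below)
qed

lemma abs_le_supnorm:
  fixes u :: "'a::topological_space \<Rightarrow> real"
  assumes "compact \<Omega>" "continuous_on \<Omega> u" "x \<in> \<Omega>"
  shows "\<bar>u x\<bar> \<le> supnorm \<Omega> u"
proof -
  have "bdd_above ((\<lambda>x. \<bar>u x\<bar>) ` \<Omega>)"
    using assms(1,2) by (intro compact_continuous_image_bdd continuous_intros)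
  then show ?thesis unfolding supnorm_def using assms(3) by (rule cSUP_upper2) simp
qed

lemma supnorm_le:
  assumes "\<Omega> \<noteq> {}" "\<And>x. x \<in> \<Omega> \<Longrightarrow> \<bar>u x\<bar> \<le> c"
  shows "supnorm \<Omega> u \<le> c"
  unfolding supnorm_def using assms by (intro cSUP_least) auto

lemma supnorm_nonneg:
  fixes u :: "'a::topological_space \<Rightarrow> real"
  assumes "compact \<Omega>" "\<Omega> \<noteq> {}" "continuous_on \<Omega> u"
  shows "0 \<le> supnorm \<Omega> u"
  using assms abs_le_supnorm by (meson abs_ge_zero ex_in_conv order_trans)

lemma abs_supnorm_diff_le:
  fixes u v :: "'a::topological_space \<Rightarrow> real"
  assumes "compact \<Omega>" "\<Omega> \<noteq> {}" "continuous_on \<Omega> u" "continuous_on \<Omega> v"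
  shows "\<bar>supnorm \<Omega> u - supnorm \<Omega> v\<bar> \<le> supnorm \<Omega> (\<lambda>x. u x - v x)"
proof -
  have diff: "continuous_on \<Omega> (\<lambda>x. u x - v x)" using assms(3,4) by (intro continuous_intros)
  have "supnorm \<Omega> u \<le> supnorm \<Omega> v + supnorm \<Omega> (\<lambda>x. u x - v x)"
    using abs_le_supnorm[OF assms(1) assms(4)] abs_le_supnorm[OF assms(1) diff]
    by (intro supnorm_le[OF assms(2)]) (smt (verit))
  moreover have "supnorm \<Omega> v \<le> supnorm \<Omega> u + supnorm \<Omega> (\<lambda>x. u x - v x)"
    using abs_le_supnorm[OF assms(1) assms(3)] abs_le_supnorm[OF assms(1) diff]
    by (intro supnorm_le[OF assms(2)]) (smt (verit))
  ultimately show ?thesis by linarith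
qed

lemma admissible_f_continuous:
  "admissible_f \<Omega> f \<Longrightarrow> continuous_on \<Omega> u \<Longrightarrow> continuous_on \<Omega> (f u)"
  unfolding admissible_f_def by blast

lemma admissible_f_pos:
  assumes "admissible_f \<Omega> f" "continuous_on \<Omega> u" "x \<in> \<Omega>"
  shows "0 < f u x"
  using assms(1)[unfolded admissible_f_def, THEN conjunct2, THEN conjunct2, THEN conjunct1] assms(2,3)
  by blast

lemma admissible_f_antimono:
  assumes "admissible_f \<Omega> f" "continuous_on \<Omega> u" "continuous_on \<Omega> v"
    "\<And>y. y \<in> \<Omega> \<Longrightarrow> u y \<le> v y" "x \<in> \<Omega>"
  shows "f v x \<le> f u x"
  using assms(1)[unfolded admissible_f_def, THEN conjunct2, THEN conjunct2, THEN conjunct2] assms(2-5)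
  by blast

lemma admissible_f_cong:
  assumes "admissible_f \<Omega> f" "continuous_on \<Omega> u" "continuous_on \<Omega> v"
    "\<And>y. y \<in> \<Omega> \<Longrightarrow> u y = v y" "x \<in> \<Omega>"
  shows "f u x = f v x"
proof (rule antisym)
  show "f u x \<le> f v x" by (rule admissible_f_antimono[OF assms(1,3,2) _ assms(5)]) (simp add: assms(4))
  show "f v x \<le> f u x" by (rule admissible_f_antimono[OF assms(1-3) _ assms(5)]) (simp add: assms(4))
qed

lemma admissible_f_const_bounds:
  assumes "admissible_f \<Omega> f" "continuous_on \<Omega> u" "\<And>y. y \<in> \<Omega> \<Longrightarrow> \<bar>u y\<bar> \<le> c" "x \<in> \<Omega>"
  shows "f (\<lambda>_. c) x \<le> f u x" "f u x \<le> f (\<lambda>_. - c) x"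
proof -
  have "- c \<le> u y \<and> u y \<le> c" if "y \<in> \<Omega>" for y using assms(3)[OF that] by linarith
  then show "f (\<lambda>_. c) x \<le> f u x" "f u x \<le> f (\<lambda>_. - c) x"
    by (auto intro!: admissible_f_antimono[OF assms(1,2) continuous_on_const _ assms(4)]
        admissible_f_antimono[OF assms(1) continuous_on_const assms(2) _ assms(4)])
qed

lemma admissible_f_pointwise_Lipschitz:
  fixes f :: "('a::topological_space \<Rightarrow> real) \<Rightarrow> ('a \<Rightarrow> real)"
  assumes f: "admissible_f \<Omega> f" and \<Omega>: "compact \<Omega>" "\<Omega> \<noteq> {}"
  obtains K where "0 < K" "\<And>u v x. continuous_on \<Omega> u \<Longrightarrow> continuous_on \<Omega> v \<Longrightarrow> x \<in> \<Omega> \<Longrightarrow>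
      \<bar>f u x - f v x\<bar> \<le> K * supnorm \<Omega> (\<lambda>x. u x - v x)"
proof -
  obtain L where L: "\<And>u v. continuous_on \<Omega> u \<Longrightarrow> continuous_on \<Omega> v \<Longrightarrow>
      supnorm \<Omega> (\<lambda>x. f u x - f v x) \<le> L * supnorm \<Omega> (\<lambda>x. u x - v x)"
    using f unfolding admissible_f_def by blast
  have "\<bar>f u x - f v x\<bar> \<le> (\<bar>L\<bar> + 1) * supnorm \<Omega> (\<lambda>x. u x - v x)"
    if u: "continuous_on \<Omega> u" and v: "continuous_on \<Omega> v" and x: "x \<in> \<Omega>" for u v x
  proof -
    have "continuous_on \<Omega> (\<lambda>x. f u x - f v x)" "continuous_on \<Omega> (\<lambda>x. u x - v x)"
      using u v admissible_f_continuous[OF f] by (auto intro!: continuous_intros)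
    then have "\<bar>f u x - f v x\<bar> \<le> supnorm \<Omega> (\<lambda>x. f u x - f v x)"
      and "0 \<le> supnorm \<Omega> (\<lambda>x. u x - v x)"
      using abs_le_supnorm[OF \<Omega>(1) _ x] supnorm_nonneg[OF \<Omega>] by auto
    then show ?thesis using L[OF u v] by (smt (verit) mult_right_mono)
  qed
  then show thesis by (intro that[of "\<bar>L\<bar> + 1"]) auto
qed

lemma cont_into_C_continuous:
  "cont_into_C T \<Omega> u \<Longrightarrow> t \<in> T \<Longrightarrow> continuous_on \<Omega> (u t)"
  unfolding cont_into_C_def by blast

lemma cont_into_C_Lipschitz_image_continuous_on:
  assumes u: "cont_into_C T \<Omega> u" and K: "0 < K"
    and g: "\<And>s t. s \<in> T \<Longrightarrow> t \<in> T \<Longrightarrow> \<bar>g s - g t\<bar> \<le> K * supnorm \<Omega> (\<lambda>x. u s x - u t x)"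
  shows "continuous_on T g"
  unfolding continuous_on_iff dist_real_def
proof (intro ballI allI impI)
  fix t e :: real assume t: "t \<in> T" and e: "0 < e"
  have "\<exists>d>0. \<forall>s\<in>T. \<bar>s - t\<bar> < d \<longrightarrow> supnorm \<Omega> (\<lambda>x. u s x - u t x) < e / K"
    using u t e K unfolding cont_into_C_def by simp
  then obtain d where "0 < d" and d: "\<forall>s\<in>T. \<bar>s - t\<bar> < d \<longrightarrow> supnorm \<Omega> (\<lambda>x. u s x - u t x) < e / K"
    by blast
  have "\<bar>g s - g t\<bar> < e" if "s \<in> T" "\<bar>s - t\<bar> < d" for s
  proof -
    have "K * supnorm \<Omega> (\<lambda>x. u s x - u t x) < e"
      using d that K by (simp add: pos_less_divide_eq mult.commute)
    then show ?thesis using g[OF that(1) t] by linarith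
  qed
  with \<open>0 < d\<close> show "\<exists>d>0. \<forall>s\<in>T. \<bar>s - t\<bar> < d \<longrightarrow> \<bar>g s - g t\<bar> < e" by blast
qed

lemma cont_into_C_supnorm_continuous_on:
  assumes "cont_into_C T \<Omega> u" "compact \<Omega>" "\<Omega> \<noteq> {}"
  shows "continuous_on T (\<lambda>t. supnorm \<Omega> (u t))"
proof (rule cont_into_C_Lipschitz_image_continuous_on[OF assms(1), where K = 1])
  fix s t assume "s \<in> T" "t \<in> T"
  then show "\<bar>supnorm \<Omega> (u s) - supnorm \<Omega> (u t)\<bar> \<le> 1 * supnorm \<Omega> (\<lambda>x. u s x - u t x)"
    using abs_supnorm_diff_le[OF assms(2,3)] cont_into_C_continuous[OF assms(1)] by simp
qed simp

lemma cont_into_C_admissible_f_continuous_on: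
  assumes "cont_into_C T \<Omega> u" "admissible_f \<Omega> f" "compact \<Omega>" "\<Omega> \<noteq> {}" "x \<in> \<Omega>"
  shows "continuous_on T (\<lambda>s. f (u s) x)"
proof -
  obtain K where "0 < K" and K: "\<And>u v x. continuous_on \<Omega> u \<Longrightarrow> continuous_on \<Omega> v \<Longrightarrow> x \<in> \<Omega> \<Longrightarrow>
      \<bar>f u x - f v x\<bar> \<le> K * supnorm \<Omega> (\<lambda>x. u x - v x)"
    using admissible_f_pointwise_Lipschitz[OF assms(2-4)] by blast
  show ?thesis
  proof (rule cont_into_C_Lipschitz_image_continuous_on[OF assms(1) \<open>0 < K\<close>])
    fix s t assume "s \<in> T" "t \<in> T"
    then show "\<bar>f (u s) x - f (u t) x\<bar> \<le> K * supnorm \<Omega> (\<lambda>x. u s x - u t x)"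
      using K cont_into_C_continuous[OF assms(1)] assms(5) by blast
  qed
qed

lemma cont_into_C_abs_le_SUP_supnorm:
  assumes "cont_into_C {..0} \<Omega> \<phi>" "compact \<Omega>" "\<Omega> \<noteq> {}" "s \<in> {a..0}" "y \<in> \<Omega>"
  shows "\<bar>\<phi> s y\<bar> \<le> (SUP t\<in>{a..0}. supnorm \<Omega> (\<phi> t))"
proof -
  have "continuous_on {a..0} (\<lambda>t. supnorm \<Omega> (\<phi> t))"
    using cont_into_C_supnorm_continuous_on[OF assms(1-3)] by (rule continuous_on_subset) auto
  then have "bdd_above ((\<lambda>t. supnorm \<Omega> (\<phi> t)) ` {a..0})"
    by (rule compact_continuous_image_bdd[OF compact_Icc])
  moreover have "\<bar>\<phi> s y\<bar> \<le> supnorm \<Omega> (\<phi> s)"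
    using assms by (intro abs_le_supnorm cont_into_C_continuous[OF assms(1)]) auto
  ultimately show ?thesis using assms(4) by (meson cSUP_upper2)
qed

lemma history_abs_bounds:
  fixes A \<phi> :: "real \<Rightarrow> 'a::topological_space \<Rightarrow> real"
  assumes \<phi>: "cont_into_C {..0} \<Omega> \<phi>" and \<Omega>: "compact \<Omega>" "\<Omega> \<noteq> {}"
    and A\<phi>: "\<forall>t\<le>0. \<forall>x\<in>\<Omega>. A t x = \<phi> t x"
    and A: "\<And>s. s \<in> S \<Longrightarrow> 0 \<le> s \<Longrightarrow> continuous_on \<Omega> (A s) \<and> supnorm \<Omega> (A s) \<le> M"
    and "a \<le> s" "y \<in> \<Omega>"
  shows "s \<le> 0 \<Longrightarrow> \<bar>A s y\<bar> \<le> (SUP t\<in>{a..0}. supnorm \<Omega> (\<phi> t))"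
    and "s \<in> S \<Longrightarrow> \<bar>A s y\<bar> \<le> max M (SUP t\<in>{a..0}. supnorm \<Omega> (\<phi> t))"
proof -
  show past: "\<bar>A s y\<bar> \<le> (SUP t\<in>{a..0}. supnorm \<Omega> (\<phi> t))" if "s \<le> 0"
    using cont_into_C_abs_le_SUP_supnorm[OF \<phi> \<Omega>, of s a y] A\<phi> assms(6,7) that by auto
  show "\<bar>A s y\<bar> \<le> max M (SUP t\<in>{a..0}. supnorm \<Omega> (\<phi> t))" if "s \<in> S"
  proof (cases "0 \<le> s")
    case True
    then show ?thesis using abs_le_supnorm[OF \<Omega>(1) _ assms(7)] A[OF that True] by force
  qed (use past in auto)
qed

lemma positive_integral_le_imp_le:
  fixes h :: "real \<Rightarrow> real"
  assumes h: "continuous_on {min a b..t} h" "\<And>s. s \<in> {min a b..t} \<Longrightarrow> 0 < h s"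
    and "b \<le> c" "c \<le> t" "a \<le> t"
    and le: "integral {a..t} h \<le> integral {b..c} h"
  shows "b \<le> a"
proof (rule ccontr)
  assume "\<not> b \<le> a"
  then have ab: "a < b" "min a b = a" by auto
  have int: "h integrable_on {a..t}"
    using h(1) ab(2) by (intro integrable_continuous_real) simp
  have "integral {a..b} h + integral {b..t} h = integral {a..t} h"
    using ab \<open>b \<le> c\<close> \<open>c \<le> t\<close> int by (intro Henstock_Kurzweil_Integration.integral_combine) auto
  moreover have "integral {b..c} h + integral {c..t} h = integral {b..t} h"
    using ab \<open>b \<le> c\<close> \<open>c \<le> t\<close> int
    by (intro Henstock_Kurzweil_Integration.integral_combine integrable_on_subinterval[OF int]) auto
  moreover have "0 \<le> integral {c..t} h"
    using ab \<open>b \<le> c\<close> \<open>c \<le> t\<close> h(2)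
    by (intro integral_nonneg integrable_on_subinterval[OF int] less_imp_le) auto
  moreover have "integral {a..b} (\<lambda>_. 0) < integral {a..b} h"
    using ab \<open>b \<le> c\<close> \<open>c \<le> t\<close> h
    by (intro integral_less_real continuous_on_subset[OF h(1)]) auto
  ultimately show False using le by simp
qed

lemma integral_const_bounds:
  fixes h :: "real \<Rightarrow> real"
  assumes "h integrable_on {a..b}" "a \<le> b" "\<And>s. s \<in> {a..b} \<Longrightarrow> m \<le> h s \<and> h s \<le> m'"
  shows "(b - a) * m \<le> integral {a..b} h" "integral {a..b} h \<le> (b - a) * m'"
  using integral_le[OF integrable_continuous_real[OF continuous_on_const] assms(1), of m]
    integral_le[OF assms(1) integrable_continuous_real[OF continuous_on_const], of m'] assms(2,3)
  by auto

lemma delay_equation_bounds: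
  fixes f :: "('a::topological_space \<Rightarrow> real) \<Rightarrow> ('a \<Rightarrow> real)" and A \<phi> :: "real \<Rightarrow> 'a \<Rightarrow> real"
  assumes f: "admissible_f \<Omega> f" and x: "x \<in> \<Omega>"
    and "0 \<le> t" "0 \<le> d" "0 \<le> d\<^sub>0"
    and A: "\<And>s. s \<le> t \<Longrightarrow> continuous_on \<Omega> (A s)"
    and h: "continuous_on {..t} (\<lambda>s. f (A s) x)"
    and A\<phi>: "\<And>s y. s \<in> {- d\<^sub>0..0} \<Longrightarrow> y \<in> \<Omega> \<Longrightarrow> A s y = \<phi> s y"
    and AM: "\<And>s y. s \<in> {- d\<^sub>0..t} \<Longrightarrow> y \<in> \<Omega> \<Longrightarrow> \<bar>A s y\<bar> \<le> M"
    and AP: "\<And>s y. s \<in> {- d\<^sub>0..0} \<Longrightarrow> y \<in> \<Omega> \<Longrightarrow> \<bar>A s y\<bar> \<le> P"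
    and eq: "integral {t - d..t} (\<lambda>s. f (A s) x) = integral {- d\<^sub>0..0} (\<lambda>s. f (\<phi> s) x)"
  shows "d\<^sub>0 * f (\<lambda>_. P) x \<le> d * f (\<lambda>_. - M) x" "d * f (\<lambda>_. M) x \<le> d\<^sub>0 * f (\<lambda>_. - P) x"
proof -
  define I where "I = integral {t - d..t} (\<lambda>s. f (A s) x)"
  have int: "(\<lambda>s. f (A s) x) integrable_on {a..b}" if "b \<le> t" for a b
    using that by (intro integrable_continuous_real continuous_on_subset[OF h]) auto
  have "f (\<phi> s) x = f (A s) x" if "s \<in> {- d\<^sub>0..0}" for s
  proof (rule admissible_f_cong[OF f _ _ _ x])
    show "continuous_on \<Omega> (A s)" using that \<open>0 \<le> t\<close> by (intro A) auto
    then show "continuous_on \<Omega> (\<phi> s)" using A\<phi>[OF that] continuous_on_cong by blast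
  qed (use A\<phi>[OF that] in simp)
  then have I: "I = integral {- d\<^sub>0..0} (\<lambda>s. f (A s) x)"
    unfolding I_def eq by (rule integral_cong)
  have "- d\<^sub>0 \<le> t - d"
  proof (rule positive_integral_le_imp_le[where c = 0])
    show "continuous_on {min (t - d) (- d\<^sub>0)..t} (\<lambda>s. f (A s) x)"
      by (rule continuous_on_subset[OF h]) auto
    show "0 < f (A s) x" if "s \<in> {min (t - d) (- d\<^sub>0)..t}" for s
      using that by (intro admissible_f_pos[OF f A x]) auto
  qed (use I I_def \<open>0 \<le> t\<close> \<open>0 \<le> d\<close> \<open>0 \<le> d\<^sub>0\<close> in auto)
  then have "f (\<lambda>_. M) x \<le> f (A s) x \<and> f (A s) x \<le> f (\<lambda>_. - M) x" if "s \<in> {t - d..t}" for s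
    using admissible_f_const_bounds[OF f A AM x] that by auto
  then have "d * f (\<lambda>_. M) x \<le> I \<and> I \<le> d * f (\<lambda>_. - M) x"
    using integral_const_bounds[OF int] \<open>0 \<le> d\<close> unfolding I_def by (smt (verit) order_refl)
  moreover have "f (\<lambda>_. P) x \<le> f (A s) x \<and> f (A s) x \<le> f (\<lambda>_. - P) x" if "s \<in> {- d\<^sub>0..0}" for s
    using admissible_f_const_bounds[OF f A AP x] that \<open>0 \<le> t\<close> by auto
  then have "d\<^sub>0 * f (\<lambda>_. P) x \<le> I \<and> I \<le> d\<^sub>0 * f (\<lambda>_. - P) x"
    using integral_const_bounds[OF int] \<open>0 \<le> t\<close> \<open>0 \<le> d\<^sub>0\<close> unfolding I by (smt (verit) order_refl)
  ultimately show "d\<^sub>0 * f (\<lambda>_. P) x \<le> d * f (\<lambda>_. - M) x" "d * f (\<lambda>_. M) x \<le> d\<^sub>0 * f (\<lambda>_. - P) x"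
    by linarith+
qed

lemma INF_div_SUP_le:
  fixes g k :: "'a::topological_space \<Rightarrow> real"
  assumes "compact \<Omega>" "continuous_on \<Omega> g" "continuous_on \<Omega> k" "\<And>y. y \<in> \<Omega> \<Longrightarrow> 0 < k y"
    and "x \<in> \<Omega>" "0 \<le> d" "g x \<le> d * k x"
  shows "(INF y\<in>\<Omega>. g y) / (SUP y\<in>\<Omega>. k y) \<le> d"
proof -
  have "(INF y\<in>\<Omega>. g y) \<le> g x" by (rule cINF_lower[OF compact_continuous_image_bdd(2)[OF assms(1,2)] assms(5)])
  moreover have k: "k x \<le> (SUP y\<in>\<Omega>. k y)" by (rule cSUP_upper[OF assms(5) compact_continuous_image_bdd(1)[OF assms(1,3)]])
  moreover have "d * k x \<le> d * (SUP y\<in>\<Omega>. k y)" using k assms(6) by (rule mult_left_mono)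
  moreover have "0 < (SUP y\<in>\<Omega>. k y)" using k assms(4,5) by fastforce
  ultimately show ?thesis using assms(7) by (simp add: divide_le_eq)
qed

lemma le_SUP_div_INF:
  fixes g k :: "'a::topological_space \<Rightarrow> real"
  assumes "compact \<Omega>" "continuous_on \<Omega> g" "continuous_on \<Omega> k" "\<And>y. y \<in> \<Omega> \<Longrightarrow> 0 < k y"
    and "x \<in> \<Omega>" "0 \<le> d" "d * k x \<le> g x"
  shows "d \<le> (SUP y\<in>\<Omega>. g y) / (INF y\<in>\<Omega>. k y)"
proof -
  obtain y\<^sub>0 where y\<^sub>0: "y\<^sub>0 \<in> \<Omega>" "\<And>y. y \<in> \<Omega> \<Longrightarrow> k y\<^sub>0 \<le> k y"
    using continuous_attains_inf[OF assms(1) _ assms(3)] assms(5) by blast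
  have "g x \<le> (SUP y\<in>\<Omega>. g y)" by (rule cSUP_upper[OF assms(5) compact_continuous_image_bdd(1)[OF assms(1,2)]])
  moreover have k: "(INF y\<in>\<Omega>. k y) \<le> k x" by (rule cINF_lower[OF compact_continuous_image_bdd(2)[OF assms(1,3)] assms(5)])
  moreover have "d * (INF y\<in>\<Omega>. k y) \<le> d * k x" using k assms(6) by (rule mult_left_mono)
  moreover have "k y\<^sub>0 \<le> (INF y\<in>\<Omega>. k y)" using y\<^sub>0 by (intro cINF_greatest) auto
  then have "0 < (INF y\<in>\<Omega>. k y)" using assms(4)[OF y\<^sub>0(1)] by linarith
  ultimately show ?thesis using assms(7) by (simp add: le_divide_eq)
qed

lemma INF_div_SUP_nonneg:
  fixes g k :: "'a::topological_space \<Rightarrow> real"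
  assumes "compact \<Omega>" "\<Omega> \<noteq> {}" "continuous_on \<Omega> k"
    and "\<And>y. y \<in> \<Omega> \<Longrightarrow> 0 \<le> g y" "\<And>y. y \<in> \<Omega> \<Longrightarrow> 0 \<le> k y"
  shows "0 \<le> (INF y\<in>\<Omega>. g y) / (SUP y\<in>\<Omega>. k y)"
proof -
  obtain x where x: "x \<in> \<Omega>" using assms(2) by blast
  have "0 \<le> (INF y\<in>\<Omega>. g y)" using assms(2,4) by (rule cINF_greatest)
  moreover have "0 \<le> (SUP y\<in>\<Omega>. k y)"
    using assms(5)[OF x] cSUP_upper[OF x compact_continuous_image_bdd(1)[OF assms(1,3)]] by linarith
  ultimately show ?thesis by simp
qed

lemma admissible_f_extremal_quotient_bounds:
  fixes f :: "('a::topological_space \<Rightarrow> real) \<Rightarrow> ('a \<Rightarrow> real)"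
  assumes \<Omega>: "compact \<Omega>" "\<Omega> \<noteq> {}" and f: "admissible_f \<Omega> f"
    and w: "continuous_on \<Omega> w" "\<forall>y\<in>\<Omega>. 0 \<le> w y"
    and x: "x \<in> \<Omega>" and "0 \<le> d"
    and lower: "w x * f (\<lambda>_. P) x \<le> d * f (\<lambda>_. - M) x"
    and upper: "d * f (\<lambda>_. M) x \<le> w x * f (\<lambda>_. - P) x"
  shows "0 \<le> (INF y\<in>\<Omega>. w y * f (\<lambda>_. P) y) / (SUP y\<in>\<Omega>. f (\<lambda>_. - M) y)"
    and "(INF y\<in>\<Omega>. w y * f (\<lambda>_. P) y) / (SUP y\<in>\<Omega>. f (\<lambda>_. - M) y) \<le> d"
    and "d \<le> (SUP y\<in>\<Omega>. w y * f (\<lambda>_. - P) y) / (INF y\<in>\<Omega>. f (\<lambda>_. M) y)"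
proof -
  have cont: "continuous_on \<Omega> (\<lambda>y. w y * f (\<lambda>_. c) y)" "continuous_on \<Omega> (f (\<lambda>_. c))" for c
    using w(1) admissible_f_continuous[OF f continuous_on_const] by (auto intro!: continuous_intros)
  have f_pos: "0 < f (\<lambda>_. c) y" if "y \<in> \<Omega>" for c y
    using admissible_f_pos[OF f continuous_on_const that] .
  show "0 \<le> (INF y\<in>\<Omega>. w y * f (\<lambda>_. P) y) / (SUP y\<in>\<Omega>. f (\<lambda>_. - M) y)"
    using w(2) f_pos by (intro INF_div_SUP_nonneg[OF \<Omega> cont(2)] mult_nonneg_nonneg)
      (auto intro: less_imp_le)
  show "(INF y\<in>\<Omega>. w y * f (\<lambda>_. P) y) / (SUP y\<in>\<Omega>. f (\<lambda>_. - M) y) \<le> d"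
    using lower f_pos \<open>0 \<le> d\<close> by (intro INF_div_SUP_le[OF \<Omega>(1) cont _ x]) auto
  show "d \<le> (SUP y\<in>\<Omega>. w y * f (\<lambda>_. - P) y) / (INF y\<in>\<Omega>. f (\<lambda>_. M) y)"
    using upper f_pos \<open>0 \<le> d\<close> by (intro le_SUP_div_INF[OF \<Omega>(1) cont _ x]) auto
qed

theorem lemma3p8:
  fixes \<Omega> :: "'a::euclidean_space set"
    and f :: "('a \<Rightarrow> real) \<Rightarrow> ('a \<Rightarrow> real)"
    and \<phi> A \<tau> :: "real \<Rightarrow> 'a \<Rightarrow> real"
    and \<tau>\<^sub>0 :: "'a \<Rightarrow> real"
    and r :: ereal
    and M :: real
  assumes \<Omega>: "compact \<Omega>"
    and f: "admissible_f \<Omega> f"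
    and \<phi>: "cont_into_C {..0} \<Omega> \<phi>"
    and \<tau>0: "continuous_on \<Omega> \<tau>\<^sub>0" "\<forall>x\<in>\<Omega>. 0 \<le> \<tau>\<^sub>0 x"
    and r: "0 < r"
    and A: "cont_into_C {t. ereal t < r} \<Omega> A"
    and A\<phi>: "\<forall>t\<le>0. \<forall>x\<in>\<Omega>. A t x = \<phi> t x"
    and \<tau>C: "\<forall>t. 0 \<le> t \<and> ereal t < r \<longrightarrow> continuous_on \<Omega> (\<tau> t)"
    and \<tau>pos: "\<forall>t. 0 \<le> t \<and> ereal t < r \<longrightarrow> (\<forall>x\<in>\<Omega>. 0 \<le> \<tau> t x)"
    and \<tau>eq: "\<forall>t. 0 \<le> t \<and> ereal t < r \<longrightarrow> (\<forall>x\<in>\<Omega>.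
               integral {t - \<tau> t x..t} (\<lambda>s. f (A s) x) = integral {- \<tau>\<^sub>0 x..0} (\<lambda>s. f (\<phi> s) x))"
    and M: "0 < M"
    and AM: "\<forall>t. 0 \<le> t \<and> ereal t < r \<longrightarrow> supnorm \<Omega> (A t) \<le> M"
  shows "let \<tau>0inf = (SUP x\<in>\<Omega>. \<tau>\<^sub>0 x);
             \<phi>max = (SUP t\<in>{- \<tau>0inf..0}. supnorm \<Omega> (\<phi> t));
             M1 = max M \<phi>max;
             \<tau>min = (INF x\<in>\<Omega>. \<tau>\<^sub>0 x * f (\<lambda>_. \<phi>max) x) / (SUP x\<in>\<Omega>. f (\<lambda>_. - M1) x);
             \<tau>max = (SUP x\<in>\<Omega>. \<tau>\<^sub>0 x * f (\<lambda>_. - \<phi>max) x) / (INF x\<in>\<Omega>. f (\<lambda>_. M1) x)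
         in \<forall>t. 0 \<le> t \<and> ereal t < r \<longrightarrow> (\<forall>x\<in>\<Omega>. 0 \<le> \<tau>min \<and> \<tau>min \<le> \<tau> t x \<and> \<tau> t x \<le> \<tau>max)"
proof (cases "\<Omega> = {}")
  case True
  then show ?thesis by (simp add: Let_def)
next
  case False
  define T where "T = (SUP x\<in>\<Omega>. \<tau>\<^sub>0 x)"
  define P where "P = (SUP t\<in>{- T..0}. supnorm \<Omega> (\<phi> t))"
  define M\<^sub>1 where "M\<^sub>1 = max M P"
  have below_r: "ereal s < r" if "s \<le> t" "ereal t < r" for s t
    using that by (meson ereal_less_eq(3) le_less_trans)
  have Acont: "continuous_on \<Omega> (A s)" if "s \<le> t" "ereal t < r" for s t
    using cont_into_C_continuous[OF A] below_r[OF that] by simp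
  note history = history_abs_bounds[OF \<phi> \<Omega> False A\<phi>, where S = "{s. ereal s < r}" and M = M and a = "- T",
      folded P_def M\<^sub>1_def]
  have bounds: "\<tau>\<^sub>0 x * f (\<lambda>_. P) x \<le> \<tau> t x * f (\<lambda>_. - M\<^sub>1) x"
      "\<tau> t x * f (\<lambda>_. M\<^sub>1) x \<le> \<tau>\<^sub>0 x * f (\<lambda>_. - P) x"
    if t: "0 \<le> t" "ereal t < r" and x: "x \<in> \<Omega>" for t x
  proof -
    have "\<tau>\<^sub>0 x \<le> T"
      unfolding T_def by (rule cSUP_upper[OF x compact_continuous_image_bdd(1)[OF \<Omega> \<tau>0(1)]])
    then have AM\<^sub>1: "\<bar>A s y\<bar> \<le> M\<^sub>1" if "s \<in> {- \<tau>\<^sub>0 x..t}" "y \<in> \<Omega>" for s y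
      using history(2)[of s y] Acont AM below_r[of s t] t that by auto
    have AP: "\<bar>A s y\<bar> \<le> P" if "s \<in> {- \<tau>\<^sub>0 x..0}" "y \<in> \<Omega>" for s y
      using history(1)[of s y] Acont AM \<open>\<tau>\<^sub>0 x \<le> T\<close> that by auto
    have "continuous_on {..t} (\<lambda>s. f (A s) x)"
      using cont_into_C_admissible_f_continuous_on[OF A f \<Omega> False x]
      by (rule continuous_on_subset) (use t below_r in auto)
    from delay_equation_bounds[OF f x t(1) _ _ _ this _ AM\<^sub>1 AP, where d = "\<tau> t x" and \<phi> = \<phi>]
    show "\<tau>\<^sub>0 x * f (\<lambda>_. P) x \<le> \<tau> t x * f (\<lambda>_. - M\<^sub>1) x"
      "\<tau> t x * f (\<lambda>_. M\<^sub>1) x \<le> \<tau>\<^sub>0 x * f (\<lambda>_. - P) x"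
      using t x \<tau>pos \<tau>0(2) \<tau>eq A\<phi> Acont[OF _ t(2)] by auto
  qed
  show ?thesis
    unfolding Let_def T_def[symmetric] P_def[symmetric] M\<^sub>1_def[symmetric]
    using admissible_f_extremal_quotient_bounds[OF \<Omega> False f \<tau>0 _ _ bounds] \<tau>pos by blast
qed

end
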